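(* Let $\mathcal{H}=\bigotimes_{i=1}^n\mathbb{C}^{d_i}$ and let $|\psi\rangle,|\phi\rangle\in\mathcal{H}$ be fully entangled pure states. If there exists a map $\Lambda\in\mathrm{LOCC}_{\mathbb{N}}$ with $\Lambda(|\psi\rangle\langle\psi|)=|\phi\rangle\langle\phi|$, then there exists a map $\Lambda'\in\mathrm{SEP}_1$ with $\Lambda'(|\psi\rangle\langle\psi|)=|\phi\rangle\langle\phi|$.
   Context: A pure state in $\bigotimes_{i=1}^n\mathbb{C}^{d_i}$ is fully entangled if each single-party reduced density matrix $\rho_i$ has rank $d_i$. A CPTP map $\Lambda$ on $\mathcal{B}(\mathcal{H})$ is in $\mathrm{SEP}_1$ if it admits a Kraus decomposition $\Lambda(X)=\sum_iK_iXK_i^\dagger$, $\sum_iK_i^\dagger K_i=\mathbb{1}$, with every $K_i=\bigotimes_{j=1}^nK_i^{(j)}$ and $K_i^{(j)}\in GL(d_j,\mathbb{C})$ for all $i,j$. A CPTP map is in $\mathrm{LOCC}_{\mathbb{N}}$ (with $m$ rounds) if it admits a Kraus decomposition with Kraus operators indexed by multi-indices $i=(i_1,\dots,i_m)$, $K_{(i_1\cdots i_m)}=L_{i_m}(\{i_j\}_{j<m})\cdots L_{i_1}$, where each $L_{i_k}(\{i_j\}_{j<k})=U^{(1)}_{i_k}\otimes\cdots\otimes U^{(s_k-1)}_{i_k}\otimes P^{(s_k)}_{i_k}\otimes U^{(s_k+1)}_{i_k}\otimes\cdots\otimes U^{(n)}_{i_k}$ (all factors depending on $\{i_j\}_{j<k}$),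 the $U$'s are unitary, the party $s_k=s_k(\{i_j\}_{j<k})$, and $\sum_{i_k}(P^{(s_k)}_{i_k})^\dagger P^{(s_k)}_{i_k}=\mathbb{1}$ for every value of $\{i_j\}_{j<k}$; i.e. in each round one party performs a generalized measurement, broadcasts the outcome, and the other parties apply unitaries depending on all previous outcomes. *)

theory Defs
  imports Complex_Main "Jordan_Normal_Form.DL_Rank"
begin

(* Multi-party Hilbert space  H = C^{d 0} \<otimes> ... \<otimes> C^{d (n-1)}.
   Computational basis vectors are indexed by multi-indices x :: nat \<Rightarrow> nat
   with x j < d j for j < n and x j = 0 for j \<ge> n. *)
type_synonym idx = "nat \<Rightarrow> nat"
type_synonym op = "idx \<Rightarrow> idx \<Rightarrow> complex"     (* operator on H, by matrix entries *)
type_synonym lop = "nat \<Rightarrow> nat \<Rightarrow> complex"    (* local operator on C^{d_j}, entries for a,b < d_j *)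

definition basis_idx :: "nat \<Rightarrow> (nat \<Rightarrow> nat) \<Rightarrow> idx set" where
  "basis_idx n d = {x. (\<forall>j<n. x j < d j) \<and> (\<forall>j. n \<le> j \<longrightarrow> x j = 0)}"

definition tens :: "nat \<Rightarrow> (nat \<Rightarrow> lop) \<Rightarrow> op" where
  "tens n A = (\<lambda>x y. \<Prod>j<n. A j (x j) (y j))"

definition op_mult :: "idx set \<Rightarrow> op \<Rightarrow> op \<Rightarrow> op" where
  "op_mult I A B = (\<lambda>x y. \<Sum>z\<in>I. A x z * B z y)"

definition op_id :: op where
  "op_id = (\<lambda>x y. if x = y then 1 else 0)"

definition dens :: "idx set \<Rightarrow> (idx \<Rightarrow> complex) \<Rightarrow> op" where
  "dens I \<psi> = (\<lambda>x y. if x \<in> I \<and> y \<in> I then \<psi> x * cnj (\<psi> y) else 0)"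

definition pure_state :: "idx set \<Rightarrow> (idx \<Rightarrow> complex) \<Rightarrow> bool" where
  "pure_state I \<psi> \<longleftrightarrow> (\<Sum>x\<in>I. (cmod (\<psi> x))\<^sup>2) = 1"

(* single-party reduced density matrix rho_i = Tr_{all but i} |psi><psi| *)
definition reduced_dm :: "nat \<Rightarrow> (nat \<Rightarrow> nat) \<Rightarrow> (idx \<Rightarrow> complex) \<Rightarrow> nat \<Rightarrow> complex mat" where
  "reduced_dm n d \<psi> i = mat (d i) (d i)
     (\<lambda>(a, b). \<Sum>x\<in>basis_idx n d. if x i = a then \<psi> x * cnj (\<psi> (x(i := b))) else 0)"

definition mat_rank :: "complex mat \<Rightarrow> nat" where
  "mat_rank A = vec_space.rank (dim_row A) A"

definition fully_entangled :: "nat \<Rightarrow> (nat \<Rightarrow> nat) \<Rightarrow> (idx \<Rightarrow> complex) \<Rightarrow> bool" where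
  "fully_entangled n d \<psi> \<longleftrightarrow> (\<forall>i<n. mat_rank (reduced_dm n d \<psi> i) = d i)"

definition kraus_apply :: "idx set \<Rightarrow> ('k \<Rightarrow> op) \<Rightarrow> 'k set \<Rightarrow> op \<Rightarrow> op" where
  "kraus_apply I K S \<rho> = (\<lambda>x y. if x \<in> I \<and> y \<in> I then
      (\<Sum>k\<in>S. \<Sum>z\<in>I. \<Sum>w\<in>I. K k x z * \<rho> z w * cnj (K k y w)) else 0)"

definition kraus_complete :: "idx set \<Rightarrow> ('k \<Rightarrow> op) \<Rightarrow> 'k set \<Rightarrow> bool" where
  "kraus_complete I K S \<longleftrightarrow>
     (\<forall>x\<in>I. \<forall>y\<in>I. (\<Sum>k\<in>S. \<Sum>z\<in>I. cnj (K k z x) * K k z y) = op_id x y)"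

definition loc_unitary :: "nat \<Rightarrow> lop \<Rightarrow> bool" where
  "loc_unitary D U \<longleftrightarrow>
     (\<forall>a<D. \<forall>b<D. (\<Sum>c<D. cnj (U c a) * U c b) = (if a = b then 1 else 0)) \<and>
     (\<forall>a<D. \<forall>b<D. (\<Sum>c<D. U a c * cnj (U b c)) = (if a = b then 1 else 0))"

definition loc_invertible :: "nat \<Rightarrow> lop \<Rightarrow> bool" where
  "loc_invertible D A \<longleftrightarrow> (\<exists>B.
     (\<forall>a<D. \<forall>b<D. (\<Sum>c<D. B a c * A c b) = (if a = b then 1 else 0)) \<and>
     (\<forall>a<D. \<forall>b<D. (\<Sum>c<D. A a c * B c b) = (if a = b then 1 else 0)))"

definition SEP1 :: "nat \<Rightarrow> (nat \<Rightarrow> nat) \<Rightarrow> (op \<Rightarrow> op) set" where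
  "SEP1 n d = {\<Lambda>. \<exists>(S :: nat set) (A :: nat \<Rightarrow> nat \<Rightarrow> lop).
      finite S \<and>
      (\<forall>k\<in>S. \<forall>j<n. loc_invertible (d j) (A k j)) \<and>
      kraus_complete (basis_idx n d) (\<lambda>k. tens n (A k)) S \<and>
      \<Lambda> = kraus_apply (basis_idx n d) (\<lambda>k. tens n (A k)) S}"

(* A history h is the list of outcomes of the previous rounds.
   After history h: party  s h  measures with outcome set  Out h  (finite),
   for outcome o the local factors are  L h oc j  (j < n): a measurement operator
   for j = s h, unitaries for all other parties. *)
definition histories :: "(nat list \<Rightarrow> nat set) \<Rightarrow> nat \<Rightarrow> nat list set" where
  "histories Out k = {h. length h = k \<and> (\<forall>i<k. h ! i \<in> Out (take i h))}"

primrec locc_kraus :: "nat \<Rightarrow> idx set \<Rightarrow> (nat list \<Rightarrow> nat \<Rightarrow> nat \<Rightarrow> lop) \<Rightarrow> nat list \<Rightarrow> nat \<Rightarrow> op" where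
  "locc_kraus n I L h 0 = op_id"
| "locc_kraus n I L h (Suc k) =
     op_mult I (tens n (L (take k h) (h ! k))) (locc_kraus n I L h k)"

definition locc_round_ok :: "nat \<Rightarrow> (nat \<Rightarrow> nat) \<Rightarrow> (nat list \<Rightarrow> nat set) \<Rightarrow> (nat list \<Rightarrow> nat)
    \<Rightarrow> (nat list \<Rightarrow> nat \<Rightarrow> nat \<Rightarrow> lop) \<Rightarrow> nat list \<Rightarrow> bool" where
  "locc_round_ok n d Out s L h \<longleftrightarrow>
     finite (Out h) \<and> s h < n \<and>
     (\<forall>oc\<in>Out h. \<forall>j<n. j \<noteq> s h \<longrightarrow> loc_unitary (d j) (L h oc j)) \<and>
     (\<forall>a<d (s h). \<forall>b<d (s h).
        (\<Sum>oc\<in>Out h. \<Sum>c<d (s h). cnj (L h oc (s h) c a) * L h oc (s h) c b) = (if a = b then 1 else 0))"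

definition LOCC_N :: "nat \<Rightarrow> (nat \<Rightarrow> nat) \<Rightarrow> (op \<Rightarrow> op) set" where
  "LOCC_N n d = {\<Lambda>. \<exists>(m :: nat) Out s L.
      (\<forall>k<m. \<forall>h\<in>histories Out k. locc_round_ok n d Out s L h) \<and>
      \<Lambda> = kraus_apply (basis_idx n d) (\<lambda>h. locc_kraus n (basis_idx n d) L h m) (histories Out m)}"

end

theory Submission
  imports Defs "HOL-Library.Countable"
begin

(* Every Kraus operator K_h of an LOCC protocol is a product operator whose factor at party j
   is the product of that party's round operators along the history h. As the protocol maps the
   pure state psi to the pure state phi, every K_h psi is a multiple c_h phi. If c_h is nonzero,
   full local rank of phi forces every factor of K_h to be invertible. If c_h = 0, look at the
   first round after which the branch annihilates psi. The state chi reached just before it has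
   full local rank: its norm is distributed over the complete branches below it, so one of them
   ends in a nonzero multiple of phi. The measurement operator of that round kills chi while all
   other parties act unitarily, hence it vanishes, and so does K_h. Discarding the vanishing
   Kraus operators leaves a complete family of products of invertible operators with the same
   action on psi. *)

section \<open>Local and product operators\<close>

definition lop_id :: lop where
  "lop_id = (\<lambda>a b. if a = b then 1 else 0)"

definition lop_mult :: "nat \<Rightarrow> lop \<Rightarrow> lop \<Rightarrow> lop" where
  "lop_mult D A B = (\<lambda>a b. \<Sum>c<D. A a c * B c b)"

definition lop_eq :: "nat \<Rightarrow> lop \<Rightarrow> lop \<Rightarrow> bool" where
  "lop_eq D A B \<longleftrightarrow> (\<forall>a<D. \<forall>b<D. A a b = B a b)"

lemma lop_mult_id_left: "a < D \<Longrightarrow> lop_mult D lop_id B a b = B a b"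
proof -
  assume "a < D"
  have "lop_mult D lop_id B a b = (\<Sum>c<D. if a = c then B c b else 0)"
    unfolding lop_mult_def lop_id_def by (intro sum.cong) auto
  then show ?thesis using \<open>a < D\<close> by (simp add: sum.delta)
qed

lemma lop_mult_id_right: "b < D \<Longrightarrow> lop_mult D A lop_id a b = A a b"
proof -
  assume "b < D"
  have "lop_mult D A lop_id a b = (\<Sum>c<D. if c = b then A a c else 0)"
    unfolding lop_mult_def lop_id_def by (intro sum.cong) auto
  then show ?thesis using \<open>b < D\<close> by (simp add: sum.delta')
qed

lemma lop_mult_assoc: "lop_mult D (lop_mult D A B) C = lop_mult D A (lop_mult D B C)"
proof (intro ext)
  fix a b
  have "lop_mult D (lop_mult D A B) C a b = (\<Sum>e<D. \<Sum>c<D. A a c * B c e * C e b)"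
    unfolding lop_mult_def by (simp add: sum_distrib_right)
  also have "\<dots> = (\<Sum>c<D. \<Sum>e<D. A a c * B c e * C e b)"
    by (rule sum.swap)
  also have "\<dots> = lop_mult D A (lop_mult D B C) a b"
    unfolding lop_mult_def by (simp add: sum_distrib_left mult.assoc)
  finally show "lop_mult D (lop_mult D A B) C a b = lop_mult D A (lop_mult D B C) a b" .
qed

definition op_apply :: "idx set \<Rightarrow> op \<Rightarrow> (idx \<Rightarrow> complex) \<Rightarrow> idx \<Rightarrow> complex" where
  "op_apply I K v = (\<lambda>x. \<Sum>z\<in>I. K x z * v z)"

definition op_gram :: "idx set \<Rightarrow> op \<Rightarrow> op" where
  "op_gram I K = (\<lambda>x y. \<Sum>z\<in>I. cnj (K z x) * K z y)"

definition sqnorm :: "idx set \<Rightarrow> (idx \<Rightarrow> complex) \<Rightarrow> complex" where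
  "sqnorm I v = (\<Sum>x\<in>I. cnj (v x) * v x)"

lemma op_apply_cong:
  "(\<And>z. z \<in> I \<Longrightarrow> K x z = K' x z) \<Longrightarrow> (\<And>z. z \<in> I \<Longrightarrow> v z = v' z)
    \<Longrightarrow> op_apply I K v x = op_apply I K' v' x"
  unfolding op_apply_def by (intro sum.cong) auto

lemma op_apply_op_mult: "op_apply I (op_mult I A B) v x = op_apply I A (op_apply I B v) x"
proof -
  have "op_apply I (op_mult I A B) v x = (\<Sum>z\<in>I. \<Sum>w\<in>I. A x w * B w z * v z)"
    unfolding op_apply_def op_mult_def by (simp add: sum_distrib_right)
  also have "\<dots> = (\<Sum>w\<in>I. \<Sum>z\<in>I. A x w * B w z * v z)"
    by (rule sum.swap)
  also have "\<dots> = op_apply I A (op_apply I B v) x"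
    unfolding op_apply_def by (simp add: sum_distrib_left mult.assoc)
  finally show ?thesis .
qed

lemma op_gram_op_mult:
  "op_gram I (op_mult I T K) x y = (\<Sum>u\<in>I. \<Sum>w\<in>I. cnj (K u x) * op_gram I T u w * K w y)"
proof -
  have "op_gram I (op_mult I T K) x y
      = (\<Sum>z\<in>I. \<Sum>u\<in>I. \<Sum>w\<in>I. cnj (K u x) * (cnj (T z u) * T z w) * K w y)"
    unfolding op_gram_def op_mult_def
    by (simp only: cnj_sum sum_product) (simp add: mult_ac)
  also have "\<dots> = (\<Sum>u\<in>I. \<Sum>w\<in>I. \<Sum>z\<in>I. cnj (K u x) * (cnj (T z u) * T z w) * K w y)"
    by (subst sum.swap) (intro sum.cong refl sum.swap)
  also have "\<dots> = (\<Sum>u\<in>I. \<Sum>w\<in>I. cnj (K u x) * op_gram I T u w * K w y)"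
    unfolding op_gram_def by (simp add: sum_distrib_left sum_distrib_right)
  finally show ?thesis .
qed

lemma sqnorm_op_apply:
  "sqnorm I (op_apply I K v) = (\<Sum>x\<in>I. \<Sum>y\<in>I. cnj (v x) * op_gram I K x y * v y)"
proof -
  have "sqnorm I (op_apply I K v)
      = (\<Sum>z\<in>I. \<Sum>x\<in>I. \<Sum>y\<in>I. cnj (v x) * (cnj (K z x) * K z y) * v y)"
    unfolding sqnorm_def op_apply_def
    by (simp only: cnj_sum sum_product) (simp add: mult_ac)
  also have "\<dots> = (\<Sum>x\<in>I. \<Sum>y\<in>I. \<Sum>z\<in>I. cnj (v x) * (cnj (K z x) * K z y) * v y)"
    by (subst sum.swap) (intro sum.cong refl sum.swap)
  also have "\<dots> = (\<Sum>x\<in>I. \<Sum>y\<in>I. cnj (v x) * op_gram I K x y * v y)"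
    unfolding op_gram_def by (simp add: sum_distrib_left sum_distrib_right)
  finally show ?thesis .
qed

lemma sum_cnj_mult_self: "(\<Sum>k\<in>S. cnj (f k) * f k) = of_real (\<Sum>k\<in>S. (cmod (f k))\<^sup>2)"
  unfolding of_real_sum by (intro sum.cong refl) (metis complex_norm_square mult.commute)

lemma sum_cnj_mult_self_eq_0_iff:
  "finite S \<Longrightarrow> (\<Sum>k\<in>S. cnj (f k) * f k) = 0 \<longleftrightarrow> (\<forall>k\<in>S. f k = 0)"
  unfolding sum_cnj_mult_self of_real_eq_0_iff by (simp add: sum_nonneg_eq_0_iff)

lemma sqnorm_eq_0_iff: "finite I \<Longrightarrow> sqnorm I v = 0 \<longleftrightarrow> (\<forall>x\<in>I. v x = 0)"
  unfolding sqnorm_def by (rule sum_cnj_mult_self_eq_0_iff)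

lemma kraus_apply_dens:
  assumes "x \<in> I" "y \<in> I"
  shows "kraus_apply I K S (dens I \<psi>) x y
       = (\<Sum>k\<in>S. op_apply I (K k) \<psi> x * cnj (op_apply I (K k) \<psi> y))"
proof -
  have "kraus_apply I K S (dens I \<psi>) x y
      = (\<Sum>k\<in>S. \<Sum>z\<in>I. \<Sum>w\<in>I. K k x z * \<psi> z * cnj (K k y w * \<psi> w))"
    using assms unfolding kraus_apply_def
    by (simp, intro sum.cong refl) (simp add: dens_def mult_ac)
  also have "\<dots> = (\<Sum>k\<in>S. op_apply I (K k) \<psi> x * cnj (op_apply I (K k) \<psi> y))"
    unfolding op_apply_def by (simp only: cnj_sum sum_product)
  finally show ?thesis .
qed

lemma rank_one_decomposition_proportional:
  assumes "finite S"
    and decomp: "\<forall>x\<in>I. \<forall>y\<in>I. (\<Sum>k\<in>S. a k x * cnj (a k y)) = \<phi> x * cnj (\<phi> y)"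
    and "k \<in> S" "x \<in> I" "y \<in> I"
  shows "a k x * \<phi> y = a k y * \<phi> x"
proof -
  define e where "e k = a k x * \<phi> y - a k y * \<phi> x" for k
  have expand: "cnj (e k) * e k
      = a k x * cnj (a k x) * (\<phi> y * cnj (\<phi> y)) - a k x * cnj (a k y) * (\<phi> y * cnj (\<phi> x))
      - a k y * cnj (a k x) * (\<phi> x * cnj (\<phi> y)) + a k y * cnj (a k y) * (\<phi> x * cnj (\<phi> x))" for k
    unfolding e_def by (simp add: algebra_simps)
  have "(\<Sum>k\<in>S. cnj (e k) * e k)
      = (\<Sum>k\<in>S. a k x * cnj (a k x)) * (\<phi> y * cnj (\<phi> y))
      - (\<Sum>k\<in>S. a k x * cnj (a k y)) * (\<phi> y * cnj (\<phi> x))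
      - (\<Sum>k\<in>S. a k y * cnj (a k x)) * (\<phi> x * cnj (\<phi> y))
      + (\<Sum>k\<in>S. a k y * cnj (a k y)) * (\<phi> x * cnj (\<phi> x))"
    unfolding expand by (simp add: sum.distrib sum_subtractf sum_distrib_right)
  also have "\<dots> = 0"
    using decomp \<open>x \<in> I\<close> \<open>y \<in> I\<close> by (simp add: algebra_simps)
  finally have "\<forall>k\<in>S. e k = 0"
    using sum_cnj_mult_self_eq_0_iff[OF \<open>finite S\<close>] by blast
  then show ?thesis using \<open>k \<in> S\<close> by (simp add: e_def)
qed

lemma basis_idx_0: "basis_idx 0 d = {\<lambda>_. 0}"
  by (auto simp: basis_idx_def)

lemma basis_idx_Suc:
  "basis_idx (Suc n) d = (\<lambda>(z, c). z(n := c)) ` (basis_idx n d \<times> {..<d n})"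
proof -
  have "x \<in> basis_idx (Suc n) d \<longleftrightarrow> x \<in> (\<lambda>(z, c). z(n := c)) ` (basis_idx n d \<times> {..<d n})" for x
  proof
    assume x: "x \<in> basis_idx (Suc n) d"
    then have "(x(n := 0), x n) \<in> basis_idx n d \<times> {..<d n}"
      by (auto simp: basis_idx_def)
    then show "x \<in> (\<lambda>(z, c). z(n := c)) ` (basis_idx n d \<times> {..<d n})"
      by (intro image_eqI[where x = "(x(n := 0), x n)"]) auto
  qed (auto simp: basis_idx_def less_Suc_eq)
  then show ?thesis by blast
qed

lemma inj_on_basis_idx_upd: "inj_on (\<lambda>(z, c). z(n := c)) (basis_idx n d \<times> {..<d n})"
proof (rule inj_onI, clarsimp)
  fix z c z' c'
  assume z: "z \<in> basis_idx n d" and z': "z' \<in> basis_idx n d" and e: "z(n := c) = z'(n := c')"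
  have "z j = z' j" for j
    using fun_cong[OF e, of j] z z' by (cases "j = n") (auto simp: basis_idx_def)
  then show "z = z' \<and> c = c'"
    using fun_cong[OF e, of n] by auto
qed

lemma finite_basis_idx: "finite (basis_idx n d)"
  by (induction n) (simp_all add: basis_idx_0 basis_idx_Suc)

lemma sum_basis_idx_prod:
  "(\<Sum>z\<in>basis_idx n d. \<Prod>j<n. f j (z j)) = (\<Prod>j<n. \<Sum>c<d j. f j c :: complex)"
proof (induction n)
  case 0
  then show ?case by (simp add: basis_idx_0)
next
  case (Suc n)
  have "(\<Sum>z\<in>basis_idx (Suc n) d. \<Prod>j<Suc n. f j (z j))
      = (\<Sum>(z, c)\<in>basis_idx n d \<times> {..<d n}. \<Prod>j<Suc n. f j ((z(n := c)) j))"
    unfolding basis_idx_Suc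
    by (subst sum.reindex[OF inj_on_basis_idx_upd]) (simp add: case_prod_beta)
  also have "\<dots> = (\<Sum>z\<in>basis_idx n d. \<Sum>c<d n. (\<Prod>j<n. f j (z j)) * f n c)"
    by (subst sum.cartesian_product[symmetric]) (simp add: prod.lessThan_Suc)
  also have "\<dots> = (\<Sum>z\<in>basis_idx n d. \<Prod>j<n. f j (z j)) * (\<Sum>c<d n. f n c)"
    by (simp only: sum_product)
  finally show ?case by (simp add: Suc prod.lessThan_Suc)
qed

lemma op_mult_tens:
  "op_mult (basis_idx n d) (tens n A) (tens n B) x y = tens n (\<lambda>j. lop_mult (d j) (A j) (B j)) x y"
proof -
  have "op_mult (basis_idx n d) (tens n A) (tens n B) x y
      = (\<Sum>z\<in>basis_idx n d. \<Prod>j<n. A j (x j) (z j) * B j (z j) (y j))"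
    unfolding op_mult_def tens_def by (simp add: prod.distrib)
  also have "\<dots> = tens n (\<lambda>j. lop_mult (d j) (A j) (B j)) x y"
    unfolding tens_def lop_mult_def by (rule sum_basis_idx_prod)
  finally show ?thesis .
qed

lemma op_gram_tens:
  "op_gram (basis_idx n d) (tens n A) x y = (\<Prod>j<n. \<Sum>c<d j. cnj (A j c (x j)) * A j c (y j))"
proof -
  have "op_gram (basis_idx n d) (tens n A) x y
      = (\<Sum>z\<in>basis_idx n d. \<Prod>j<n. cnj (A j (z j) (x j)) * A j (z j) (y j))"
    unfolding op_gram_def tens_def by (simp add: cnj_prod prod.distrib)
  also have "\<dots> = (\<Prod>j<n. \<Sum>c<d j. cnj (A j c (x j)) * A j c (y j))"
    by (rule sum_basis_idx_prod)
  finally show ?thesis .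
qed

lemma tens_cong:
  assumes "\<forall>j<n. lop_eq (d j) (A j) (B j)" "x \<in> basis_idx n d" "y \<in> basis_idx n d"
  shows "tens n A x y = tens n B x y"
  using assms unfolding tens_def lop_eq_def basis_idx_def by (intro prod.cong) auto

lemma tens_eq_0:
  assumes "j < n" "\<forall>a<d j. \<forall>b<d j. A j a b = 0" "x \<in> basis_idx n d" "y \<in> basis_idx n d"
  shows "tens n A x y = 0"
  using assms unfolding tens_def basis_idx_def by (intro prod_zero bexI[of _ j]) auto

lemma tens_lop_id:
  assumes x: "x \<in> basis_idx n d" and y: "y \<in> basis_idx n d"
  shows "tens n (\<lambda>_. lop_id) x y = op_id x y"
proof (cases "x = y")
  case True
  then show ?thesis by (simp add: tens_def lop_id_def op_id_def)
next
  case False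
  then obtain j where "x j \<noteq> y j" by auto
  moreover have "j < n"
    using x y calculation by (auto simp: basis_idx_def) (metis not_le)
  ultimately show ?thesis
    using False by (auto simp: tens_def lop_id_def op_id_def intro!: prod_zero)
qed

lemma op_apply_tens_lop_id:
  assumes "x \<in> basis_idx n d"
  shows "op_apply (basis_idx n d) (tens n (\<lambda>_. lop_id)) v x = v x"
proof -
  have "op_apply (basis_idx n d) (tens n (\<lambda>_. lop_id)) v x
      = (\<Sum>z\<in>basis_idx n d. if x = z then v z else 0)"
    unfolding op_apply_def using assms
    by (intro sum.cong refl) (simp add: tens_lop_id op_id_def)
  then show ?thesis using assms by (simp add: sum.delta finite_basis_idx)
qed

lemma op_apply_tens_tens:
  "op_apply (basis_idx n d) (tens n A) (op_apply (basis_idx n d) (tens n B) v) x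
     = op_apply (basis_idx n d) (tens n (\<lambda>j. lop_mult (d j) (A j) (B j))) v x"
  by (simp only: op_apply_op_mult[symmetric]) (rule op_apply_cong, simp_all add: op_mult_tens)

lemma op_apply_tens_cong:
  assumes "\<forall>j<n. lop_eq (d j) (A j) (B j)" "x \<in> basis_idx n d"
  shows "op_apply (basis_idx n d) (tens n A) v x = op_apply (basis_idx n d) (tens n B) v x"
  using assms by (intro op_apply_cong tens_cong) auto

section \<open>Full local rank\<close>

definition contract_at ::
  "(nat \<Rightarrow> nat) \<Rightarrow> nat \<Rightarrow> (nat \<Rightarrow> complex) \<Rightarrow> (idx \<Rightarrow> complex) \<Rightarrow> idx \<Rightarrow> complex" where
  "contract_at d j w \<chi> x = (\<Sum>b<d j. w b * \<chi> (x(j := b)))"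

definition full_local_rank :: "nat \<Rightarrow> (nat \<Rightarrow> nat) \<Rightarrow> nat \<Rightarrow> (idx \<Rightarrow> complex) \<Rightarrow> bool" where
  "full_local_rank n d j \<chi> \<longleftrightarrow>
     (\<forall>w. (\<forall>x\<in>basis_idx n d. contract_at d j w \<chi> x = 0) \<longrightarrow> (\<forall>a<d j. w a = 0))"

definition covector_at :: "nat \<Rightarrow> (nat \<Rightarrow> complex) \<Rightarrow> nat \<Rightarrow> lop" where
  "covector_at j w = (\<lambda>i. if i = j then (\<lambda>_ b. w b) else lop_id)"

lemma op_apply_covector_at:
  assumes j: "j < n" and x: "x \<in> basis_idx n d"
  shows "op_apply (basis_idx n d) (tens n (covector_at j w)) \<chi> x = contract_at d j w \<chi> x"
proof -
  let ?J = "(\<lambda>b. x(j := b)) ` {..<d j}"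
  have J: "?J \<subseteq> basis_idx n d"
    using x j by (auto simp: basis_idx_def)
  have inj: "inj_on (\<lambda>b. x(j := b)) {..<d j}"
    by (rule inj_onI) (metis fun_upd_same)
  have on_J: "tens n (covector_at j w) x z = w (z j)" if z: "z \<in> ?J" for z
  proof -
    obtain b where b: "z = x(j := b)" using z by blast
    have "tens n (covector_at j w) x z = (\<Prod>i<n. if i = j then w (z j) else 1)"
      unfolding tens_def by (intro prod.cong refl) (auto simp: covector_at_def lop_id_def b)
    then show ?thesis using j by (simp add: prod.delta)
  qed
  have off_J: "tens n (covector_at j w) x z = 0" if z: "z \<in> basis_idx n d" "z \<notin> ?J" for z
  proof -
    have "\<exists>i<n. i \<noteq> j \<and> x i \<noteq> z i"
    proof (rule ccontr)
      assume "\<not> ?thesis"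
      then have "z = x(j := z j)"
        using x z(1) by (auto simp: basis_idx_def fun_eq_iff) (metis not_le)
      moreover have "z j < d j" using z(1) j by (auto simp: basis_idx_def)
      ultimately show False using z(2) by (metis image_eqI lessThan_iff)
    qed
    then obtain i where "i < n" "i \<noteq> j" "x i \<noteq> z i" by blast
    then show ?thesis unfolding tens_def
      by (intro prod_zero bexI[of _ i]) (auto simp: covector_at_def lop_id_def)
  qed
  have "op_apply (basis_idx n d) (tens n (covector_at j w)) \<chi> x
      = (\<Sum>z\<in>?J. tens n (covector_at j w) x z * \<chi> z)"
    unfolding op_apply_def using J off_J by (intro sum.mono_neutral_right finite_basis_idx) auto
  also have "\<dots> = (\<Sum>z\<in>?J. w (z j) * \<chi> z)"
    using on_J by (intro sum.cong) auto
  also have "\<dots> = contract_at d j w \<chi> x"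
    unfolding contract_at_def by (subst sum.reindex[OF inj]) simp
  finally show ?thesis .
qed

lemma contract_at_cong:
  "(\<And>b. b < d j \<Longrightarrow> w b = w' b) \<Longrightarrow> contract_at d j w \<chi> x = contract_at d j w' \<chi> x"
  unfolding contract_at_def by (intro sum.cong) auto

lemma full_local_rank_if_reduced_dm_rank:
  assumes j: "j < n" and rank: "mat_rank (reduced_dm n d \<chi> j) = d j"
  shows "full_local_rank n d j \<chi>"
  unfolding full_local_rank_def
proof (rule allI, rule impI)
  fix w assume w: "\<forall>x\<in>basis_idx n d. contract_at d j w \<chi> x = 0"
  let ?R = "reduced_dm n d \<chi> j"
  have R: "?R \<in> carrier_mat (d j) (d j)"
    by (simp add: reduced_dm_def)
  have "det ?R \<noteq> 0"
    using rank vec_space.det_rank_iff[OF R] by (simp add: mat_rank_def reduced_dm_def)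
  define u where "u = vec (d j) (\<lambda>b. cnj (w b))"
  have "?R *\<^sub>v u = 0\<^sub>v (d j)"
  proof (rule eq_vecI)
    fix a assume "a < dim_vec (0\<^sub>v (d j) :: complex vec)"
    then have a: "a < d j" by simp
    have "(?R *\<^sub>v u) $ a = (\<Sum>b<d j. ?R $$ (a, b) * cnj (w b))"
      using a by (simp add: scalar_prod_def u_def atLeast0LessThan reduced_dm_def)
    also have "\<dots>
        = (\<Sum>b<d j. \<Sum>x\<in>basis_idx n d. if x j = a then \<chi> x * cnj (w b * \<chi> (x(j := b))) else 0)"
      using a by (auto simp: reduced_dm_def sum_distrib_left mult_ac intro!: sum.cong)
    also have "\<dots>
        = (\<Sum>x\<in>basis_idx n d. \<Sum>b<d j. if x j = a then \<chi> x * cnj (w b * \<chi> (x(j := b))) else 0)"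
      by (rule sum.swap)
    also have "\<dots> = (\<Sum>x\<in>basis_idx n d. if x j = a then \<chi> x * cnj (contract_at d j w \<chi> x) else 0)"
      unfolding contract_at_def by (intro sum.cong refl) (simp add: sum_distrib_left)
    also have "\<dots> = 0"
      using w by (intro sum.neutral) simp
    finally show "(?R *\<^sub>v u) $ a = 0\<^sub>v (d j) $ a" using a by simp
  qed (simp add: reduced_dm_def)
  moreover have "u \<in> carrier_vec (d j)"
    by (simp add: u_def)
  ultimately have u: "u = 0\<^sub>v (d j)"
    using \<open>det ?R \<noteq> 0\<close> det_0_iff_vec_prod_zero_field[OF R] by blast
  show "\<forall>a<d j. w a = 0"
  proof (intro allI impI)
    fix a assume "a < d j"
    then show "w a = 0" using arg_cong[OF u, of "\<lambda>v. v $ a"] by (simp add: u_def)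
  qed
qed

lemma loc_invertible_or_left_kernel:
  "loc_invertible D A \<or> (\<exists>w. (\<exists>a<D. w a \<noteq> 0) \<and> (\<forall>b<D. (\<Sum>a<D. w a * A a b) = 0))"
proof -
  define M where "M = (mat D D (\<lambda>(a, b). A a b) :: complex mat)"
  have M: "M \<in> carrier_mat D D"
    by (simp add: M_def)
  show ?thesis
  proof (cases "det M = 0")
    case True
    then have "det (transpose_mat M) = 0"
      using det_transpose[OF M] by simp
    then obtain v where v: "v \<in> carrier_vec D" "v \<noteq> 0\<^sub>v D" "transpose_mat M *\<^sub>v v = 0\<^sub>v D"
      using det_0_iff_vec_prod_zero_field[of "transpose_mat M" D] M by auto
    have "\<exists>a<D. v $ a \<noteq> 0"
    proof (rule ccontr)
      assume "\<not> (\<exists>a<D. v $ a \<noteq> 0)"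
      then have "v = 0\<^sub>v D" using v(1) by (intro eq_vecI) auto
      then show False using v(2) by simp
    qed
    moreover have "(\<Sum>a<D. v $ a * A a b) = 0" if "b < D" for b
    proof -
      have "(transpose_mat M *\<^sub>v v) $ b = (\<Sum>a<D. v $ a * A a b)"
        using that v(1) by (simp add: M_def scalar_prod_def atLeast0LessThan mult.commute)
      then show ?thesis using v(3) that by simp
    qed
    ultimately show ?thesis by blast
  next
    case False
    then have "M \<in> Units (ring_mat TYPE(complex) D ())"
      by (rule det_non_zero_imp_unit[OF M])
    then obtain N where N: "N \<in> carrier_mat D D" "N * M = 1\<^sub>m D" "M * N = 1\<^sub>m D"
      by (auto simp: Units_def ring_mat_def)
    have "(\<Sum>c<D. N $$ (a, c) * A c b) = (N * M) $$ (a, b)"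
      and "(\<Sum>c<D. A a c * N $$ (c, b)) = (M * N) $$ (a, b)" if "a < D" "b < D" for a b
      using that N(1) by (simp_all add: M_def scalar_prod_def atLeast0LessThan)
    then have "loc_invertible D A"
      unfolding loc_invertible_def using N(2,3) by (intro exI[of _ "\<lambda>a c. N $$ (a, c)"]) auto
    then show ?thesis by simp
  qed
qed

lemma contract_at_tens:
  assumes j: "j < n" and x: "x \<in> basis_idx n d"
  shows "contract_at d j w (op_apply (basis_idx n d) (tens n B) \<chi>) x
       = op_apply (basis_idx n d) (tens n (B(j := lop_id)))
           (contract_at d j (\<lambda>b. \<Sum>a<d j. w a * B j a b) \<chi>) x"
proof -
  let ?I = "basis_idx n d" and ?w' = "\<lambda>b. \<Sum>a<d j. w a * B j a b"
  have factors: "\<forall>i<n. lop_eq (d i) (lop_mult (d i) (covector_at j w i) (B i))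
      (lop_mult (d i) ((B(j := lop_id)) i) (covector_at j ?w' i))"
  proof (intro allI impI)
    fix i
    show "lop_eq (d i) (lop_mult (d i) (covector_at j w i) (B i))
        (lop_mult (d i) ((B(j := lop_id)) i) (covector_at j ?w' i))"
    proof (cases "i = j")
      case True
      then show ?thesis
        by (simp add: lop_eq_def covector_at_def lop_mult_id_left lop_mult_def[of _ "\<lambda>_ b. w b"])
    next
      case False
      then show ?thesis
        by (simp add: lop_eq_def covector_at_def lop_mult_id_left lop_mult_id_right)
    qed
  qed
  have "contract_at d j w (op_apply ?I (tens n B) \<chi>) x
      = op_apply ?I (tens n (covector_at j w)) (op_apply ?I (tens n B) \<chi>) x"
    using j x by (simp add: op_apply_covector_at)
  also have "\<dots> = op_apply ?I (tens n (\<lambda>i. lop_mult (d i) (covector_at j w i) (B i))) \<chi> x"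
    by (rule op_apply_tens_tens)
  also have "\<dots> = op_apply ?I (tens n (\<lambda>i. lop_mult (d i) ((B(j := lop_id)) i) (covector_at j ?w' i))) \<chi> x"
    using factors x by (rule op_apply_tens_cong)
  also have "\<dots> = op_apply ?I (tens n (B(j := lop_id))) (op_apply ?I (tens n (covector_at j ?w')) \<chi>) x"
    by (rule op_apply_tens_tens[symmetric])
  also have "\<dots> = op_apply ?I (tens n (B(j := lop_id))) (contract_at d j ?w' \<chi>) x"
    using j by (intro op_apply_cong) (simp_all add: op_apply_covector_at)
  finally show ?thesis .
qed

lemma contract_at_vanishes_if_tens_image:
  assumes j: "j < n" and "c \<noteq> 0"
    and image: "\<forall>x\<in>basis_idx n d. op_apply (basis_idx n d) (tens n B) \<chi> x = c * \<phi> x"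
    and vanish: "\<forall>x\<in>basis_idx n d. contract_at d j (\<lambda>b. \<Sum>a<d j. w a * B j a b) \<chi> x = 0"
    and x: "x \<in> basis_idx n d"
  shows "contract_at d j w \<phi> x = 0"
proof -
  have "c * contract_at d j w \<phi> x = contract_at d j w (op_apply (basis_idx n d) (tens n B) \<chi>) x"
    unfolding contract_at_def sum_distrib_left using image x j
    by (intro sum.cong refl) (auto simp: basis_idx_def)
  also have "\<dots> = 0"
    unfolding contract_at_tens[OF j x] using vanish by (simp add: op_apply_def)
  finally show ?thesis using \<open>c \<noteq> 0\<close> by simp
qed

lemma loc_invertible_if_tens_image_full:
  assumes j: "j < n" and c: "c \<noteq> 0" and full: "full_local_rank n d j \<phi>"
    and image: "\<forall>x\<in>basis_idx n d. op_apply (basis_idx n d) (tens n B) \<chi> x = c * \<phi> x"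
  shows "loc_invertible (d j) (B j)"
proof (rule ccontr)
  assume "\<not> loc_invertible (d j) (B j)"
  then obtain w where w: "\<exists>a<d j. w a \<noteq> 0" "\<forall>b<d j. (\<Sum>a<d j. w a * B j a b) = 0"
    using loc_invertible_or_left_kernel by blast
  have "\<forall>x\<in>basis_idx n d. contract_at d j (\<lambda>b. \<Sum>a<d j. w a * B j a b) \<chi> x = 0"
    using w(2) by (simp add: contract_at_def)
  then have "\<forall>x\<in>basis_idx n d. contract_at d j w \<phi> x = 0"
    using contract_at_vanishes_if_tens_image[OF j c image] by blast
  then show False
    using full w(1) unfolding full_local_rank_def by blast
qed

lemma full_local_rank_if_tens_image_full:
  assumes j: "j < n" and c: "c \<noteq> 0" and full: "full_local_rank n d j \<phi>"
    and image: "\<forall>x\<in>basis_idx n d. op_apply (basis_idx n d) (tens n B) \<chi> x = c * \<phi> x"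
  shows "full_local_rank n d j \<chi>"
  unfolding full_local_rank_def
proof (rule allI, rule impI)
  fix v assume v: "\<forall>x\<in>basis_idx n d. contract_at d j v \<chi> x = 0"
  obtain B' where B': "\<forall>a<d j. \<forall>b<d j. (\<Sum>c<d j. B' a c * B j c b) = (if a = b then 1 else 0)"
    using loc_invertible_if_tens_image_full[OF assms] unfolding loc_invertible_def by blast
  define w where "w a = (\<Sum>e<d j. v e * B' e a)" for a
  have wB: "(\<Sum>a<d j. w a * B j a b) = v b" if b: "b < d j" for b
  proof -
    have "(\<Sum>a<d j. w a * B j a b) = (\<Sum>e<d j. \<Sum>a<d j. v e * B' e a * B j a b)"
      unfolding w_def sum_distrib_right by (rule sum.swap)
    also have "\<dots> = (\<Sum>e<d j. v e * (if e = b then 1 else 0))"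
      using B' b by (intro sum.cong refl) (simp add: sum_distrib_left[symmetric] mult.assoc)
    also have "\<dots> = v b"
      using b by (simp add: sum.delta' if_distrib cong: if_cong)
    finally show ?thesis .
  qed
  have "\<forall>x\<in>basis_idx n d. contract_at d j (\<lambda>b. \<Sum>a<d j. w a * B j a b) \<chi> x = 0"
    using v wB contract_at_cong[of d j "\<lambda>b. \<Sum>a<d j. w a * B j a b" v] by simp
  then have "\<forall>x\<in>basis_idx n d. contract_at d j w \<phi> x = 0"
    using contract_at_vanishes_if_tens_image[OF j c image] by blast
  then have "\<forall>a<d j. w a = 0"
    using full unfolding full_local_rank_def by blast
  then show "\<forall>a<d j. v a = 0"
    using wB by simp
qed

lemma measurement_vanishes_if_full_local_rank:
  assumes s: "s < n" and full: "full_local_rank n d s \<chi>"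
    and unitary: "\<forall>j<n. j \<noteq> s \<longrightarrow> loc_unitary (d j) (A j)"
    and kills: "\<forall>x\<in>basis_idx n d. op_apply (basis_idx n d) (tens n A) \<chi> x = 0"
  shows "\<forall>a<d s. \<forall>b<d s. A s a b = 0"
proof (intro allI impI)
  fix a b assume a: "a < d s" and b: "b < d s"
  let ?I = "basis_idx n d"
  define E where "E = (\<lambda>i p q. cnj (A i q p))(s := (\<lambda>_ c. if c = a then 1 else 0))"
  have factors: "\<forall>i<n. lop_eq (d i) (covector_at s (A s a) i) (lop_mult (d i) (E i) (A i))"
  proof (intro allI impI)
    fix i assume "i < n"
    show "lop_eq (d i) (covector_at s (A s a) i) (lop_mult (d i) (E i) (A i))"
    proof (cases "i = s")
      case True
      have "lop_mult (d s) (E s) (A s) p q = (\<Sum>c<d s. if c = a then A s c q else 0)" for p q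
        unfolding lop_mult_def E_def by (intro sum.cong) auto
      then show ?thesis
        using True a by (simp add: lop_eq_def covector_at_def sum.delta')
    next
      case False
      have "lop_mult (d i) (E i) (A i) p q = lop_id p q" if "p < d i" "q < d i" for p q
        using unitary \<open>i < n\<close> False that
        unfolding loc_unitary_def E_def lop_mult_def lop_id_def by auto
      then show ?thesis
        using False by (simp add: lop_eq_def covector_at_def)
    qed
  qed
  have "contract_at d s (A s a) \<chi> x = 0" if x: "x \<in> ?I" for x
  proof -
    have "contract_at d s (A s a) \<chi> x = op_apply ?I (tens n (covector_at s (A s a))) \<chi> x"
      using s x by (simp add: op_apply_covector_at)
    also have "\<dots> = op_apply ?I (tens n (\<lambda>i. lop_mult (d i) (E i) (A i))) \<chi> x"
      using factors x by (rule op_apply_tens_cong)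
    also have "\<dots> = op_apply ?I (tens n E) (op_apply ?I (tens n A) \<chi>) x"
      by (rule op_apply_tens_tens[symmetric])
    also have "\<dots> = 0"
      using kills by (simp add: op_apply_def)
    finally show ?thesis .
  qed
  then show "A s a b = 0"
    using full b unfolding full_local_rank_def by blast
qed

section \<open>Histories and branch operators\<close>

lemma histories_0: "histories Out 0 = {[]}"
  by (auto simp: histories_def)

lemma snoc_in_histories_iff:
  "h @ [oc] \<in> histories Out (Suc k) \<longleftrightarrow> h \<in> histories Out k \<and> oc \<in> Out h"
  by (auto simp: histories_def nth_append less_Suc_eq)

lemma histories_Suc: "histories Out (Suc k) = (\<lambda>(h, oc). h @ [oc]) ` Sigma (histories Out k) Out"
proof -
  have "h' \<in> (\<lambda>(h, oc). h @ [oc]) ` Sigma (histories Out k) Out"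
    if h': "h' \<in> histories Out (Suc k)" for h'
  proof -
    have "h' \<noteq> []" using h' by (auto simp: histories_def)
    then obtain h oc where "h' = h @ [oc]" by (metis rev_exhaust)
    then show ?thesis using h' snoc_in_histories_iff by fastforce
  qed
  then show ?thesis using snoc_in_histories_iff by fastforce
qed

definition extensions :: "(nat list \<Rightarrow> nat set) \<Rightarrow> nat list \<Rightarrow> nat \<Rightarrow> nat list set" where
  "extensions Out g l = {h \<in> histories Out l. take (length g) h = g}"

lemma extensions_Suc:
  assumes "length g \<le> l"
  shows "extensions Out g (Suc l) = (\<lambda>(h, oc). h @ [oc]) ` Sigma (extensions Out g l) Out"
proof -
  have "take (length g) (h @ [oc]) = take (length g) h" if "h \<in> histories Out l" for h oc
    using that assms by (simp add: histories_def)
  then show ?thesis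
    unfolding extensions_def histories_Suc by fastforce
qed

text \<open>The factor of party \<open>j\<close> accumulated in rounds \<open>k, \<dots>, m - 1\<close> along the history \<open>h\<close>,
  later rounds acting on the left.\<close>

primrec branch_factor ::
  "(nat \<Rightarrow> nat) \<Rightarrow> (nat list \<Rightarrow> nat \<Rightarrow> nat \<Rightarrow> lop) \<Rightarrow> nat list \<Rightarrow> nat \<Rightarrow> nat \<Rightarrow> nat \<Rightarrow> lop" where
  "branch_factor d L h k 0 = (\<lambda>j. lop_id)"
| "branch_factor d L h k (Suc m) =
     (if m < k then (\<lambda>j. lop_id)
      else (\<lambda>j. lop_mult (d j) (L (take m h) (h ! m) j) (branch_factor d L h k m j)))"

lemma locc_kraus_eq_tens:
  "x \<in> basis_idx n d \<Longrightarrow> y \<in> basis_idx n d \<Longrightarrow>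
    locc_kraus n (basis_idx n d) L h m x y = tens n (branch_factor d L h 0 m) x y"
proof (induction m arbitrary: x y)
  case 0
  then show ?case by (simp add: tens_lop_id)
next
  case (Suc m)
  then have "locc_kraus n (basis_idx n d) L h (Suc m) x y
      = op_mult (basis_idx n d) (tens n (L (take m h) (h ! m))) (tens n (branch_factor d L h 0 m)) x y"
    by (simp add: op_mult_def)
  then show ?case by (simp add: op_mult_tens)
qed

lemma branch_factor_take_cong:
  "take m h = take m h' \<Longrightarrow> branch_factor d L h k m = branch_factor d L h' k m"
proof (induction m arbitrary: h h')
  case 0
  then show ?case by simp
next
  case (Suc m)
  have "take m h = take m h'"
    using arg_cong[OF Suc.prems, of "take m"] by (simp add: min_def)
  moreover have "h ! m = h' ! m"
    using arg_cong[OF Suc.prems, of "\<lambda>xs. xs ! m"] by simp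
  ultimately show ?case
    using Suc.IH[OF \<open>take m h = take m h'\<close>] by simp
qed

lemma branch_factor_snoc:
  "length h = m \<Longrightarrow>
    branch_factor d L (h @ [oc]) 0 (Suc m) = (\<lambda>j. lop_mult (d j) (L h oc j) (branch_factor d L h 0 m j))"
  using branch_factor_take_cong[of m "h @ [oc]" h] by (simp add: nth_append)

lemma lop_mult_cong_right: "lop_eq D B B' \<Longrightarrow> b < D \<Longrightarrow> lop_mult D A B a b = lop_mult D A B' a b"
  unfolding lop_eq_def lop_mult_def by (intro sum.cong) auto

lemma branch_factor_split:
  "k \<le> l \<Longrightarrow> l \<le> m \<Longrightarrow>
    lop_eq (d j) (branch_factor d L h k m j)
      (lop_mult (d j) (branch_factor d L h l m j) (branch_factor d L h k l j))"
proof (induction m)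
  case 0
  then show ?case by (simp add: lop_eq_def lop_mult_id_left)
next
  case (Suc m)
  show ?case
  proof (cases "l = Suc m")
    case True
    then show ?thesis by (simp add: lop_eq_def lop_mult_id_left)
  next
    case False
    with Suc.prems have "k \<le> m" "l \<le> m" by simp_all
    then have IH: "lop_eq (d j) (branch_factor d L h k m j)
        (lop_mult (d j) (branch_factor d L h l m j) (branch_factor d L h k l j))"
      using Suc.IH Suc.prems(1) by simp
    show ?thesis unfolding lop_eq_def
    proof (intro allI impI)
      fix a b assume "a < d j" "b < d j"
      then show "branch_factor d L h k (Suc m) j a b
          = lop_mult (d j) (branch_factor d L h l (Suc m) j) (branch_factor d L h k l j) a b"
        using \<open>k \<le> m\<close> \<open>l \<le> m\<close> lop_mult_cong_right[OF IH \<open>b < d j\<close>]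
        by (simp add: lop_mult_assoc)
    qed
  qed
qed

lemma op_apply_branch_factor_split:
  assumes "k \<le> l" "x \<in> basis_idx n d"
  shows "op_apply (basis_idx n d) (tens n (branch_factor d L h 0 l)) v x
       = op_apply (basis_idx n d) (tens n (branch_factor d L h k l))
           (op_apply (basis_idx n d) (tens n (branch_factor d L h 0 k)) v) x"
  unfolding op_apply_tens_tens using assms branch_factor_split[of 0 k l]
  by (intro op_apply_tens_cong) auto

section \<open>LOCC protocols\<close>

lemma sum_op_gram_round:
  assumes round: "locc_round_ok n d Out s L h"
    and u: "u \<in> basis_idx n d" and w: "w \<in> basis_idx n d"
  shows "(\<Sum>oc\<in>Out h. op_gram (basis_idx n d) (tens n (L h oc)) u w) = op_id u w"
proof -
  let ?s = "s h" and ?rest = "{..<n} - {s h}"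
  let ?g = "\<lambda>oc j. \<Sum>c<d j. cnj (L h oc j c (u j)) * L h oc j c (w j)"
  have s: "?s < n"
    using round by (simp add: locc_round_ok_def)
  have uw: "u j < d j" "w j < d j" if "j < n" for j
    using u w that by (auto simp: basis_idx_def)
  have unitary: "?g oc j = lop_id (u j) (w j)" if "oc \<in> Out h" "j \<in> ?rest" for oc j
    using round that uw[of j] unfolding locc_round_ok_def loc_unitary_def lop_id_def by auto
  have "(\<Sum>oc\<in>Out h. op_gram (basis_idx n d) (tens n (L h oc)) u w)
      = (\<Sum>oc\<in>Out h. ?g oc ?s * (\<Prod>j\<in>?rest. ?g oc j))"
    unfolding op_gram_tens using s by (intro sum.cong refl) (simp add: prod.remove)
  also have "\<dots> = (\<Sum>oc\<in>Out h. ?g oc ?s) * (\<Prod>j\<in>?rest. lop_id (u j) (w j))"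
    unfolding sum_distrib_right using unitary by (intro sum.cong refl) simp
  also have "(\<Sum>oc\<in>Out h. ?g oc ?s) = lop_id (u ?s) (w ?s)"
    using round uw[OF s] unfolding locc_round_ok_def lop_id_def by auto
  also have "lop_id (u ?s) (w ?s) * (\<Prod>j\<in>?rest. lop_id (u j) (w j)) = tens n (\<lambda>_. lop_id) u w"
    unfolding tens_def using s by (simp add: prod.remove)
  also have "\<dots> = op_id u w"
    using u w by (rule tens_lop_id)
  finally show ?thesis .
qed

locale locc_protocol =
  fixes n :: nat and d :: "nat \<Rightarrow> nat" and Out :: "nat list \<Rightarrow> nat set"
    and s :: "nat list \<Rightarrow> nat" and L :: "nat list \<Rightarrow> nat \<Rightarrow> nat \<Rightarrow> lop" and m :: nat
  assumes round_ok: "k < m \<Longrightarrow> h \<in> histories Out k \<Longrightarrow> locc_round_ok n d Out s L h"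
begin

abbreviation branch_op :: "nat list \<Rightarrow> nat \<Rightarrow> op" where
  "branch_op h k \<equiv> tens n (branch_factor d L h 0 k)"

lemma finite_histories: "k \<le> m \<Longrightarrow> finite (histories Out k)"
proof (induction k)
  case 0
  then show ?case by (simp add: histories_0)
next
  case (Suc k)
  have "finite (Out h)" if "h \<in> histories Out k" for h
    using round_ok[OF _ that] Suc.prems by (simp add: locc_round_ok_def)
  then show ?case
    unfolding histories_Suc using Suc by (intro finite_imageI finite_SigmaI) auto
qed

lemma sum_op_gram_children:
  assumes "k < m" and h: "h \<in> histories Out k" and "x \<in> basis_idx n d" "y \<in> basis_idx n d"
  shows "(\<Sum>oc\<in>Out h. op_gram (basis_idx n d) (branch_op (h @ [oc]) (Suc k)) x y)
       = op_gram (basis_idx n d) (branch_op h k) x y"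
proof -
  let ?I = "basis_idx n d" and ?K = "branch_op h k"
  have "length h = k"
    using h by (simp add: histories_def)
  then have "branch_op (h @ [oc]) (Suc k) = op_mult ?I (tens n (L h oc)) ?K" for oc
    unfolding branch_factor_snoc[OF \<open>length h = k\<close>] by (simp add: fun_eq_iff op_mult_tens)
  then have "(\<Sum>oc\<in>Out h. op_gram ?I (branch_op (h @ [oc]) (Suc k)) x y)
      = (\<Sum>oc\<in>Out h. \<Sum>u\<in>?I. \<Sum>w\<in>?I. cnj (?K u x) * op_gram ?I (tens n (L h oc)) u w * ?K w y)"
    by (simp add: op_gram_op_mult)
  also have "\<dots> = (\<Sum>u\<in>?I. \<Sum>w\<in>?I. cnj (?K u x) * (\<Sum>oc\<in>Out h. op_gram ?I (tens n (L h oc)) u w) * ?K w y)"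
    by (subst sum.swap, intro sum.cong refl, subst sum.swap) (simp add: sum_distrib_left sum_distrib_right)
  also have "\<dots> = (\<Sum>u\<in>?I. \<Sum>w\<in>?I. if u = w then cnj (?K u x) * ?K w y else 0)"
    using sum_op_gram_round[OF round_ok[OF assms(1,2)]] by (intro sum.cong refl) (simp add: op_id_def)
  also have "\<dots> = op_gram ?I ?K x y"
    unfolding op_gram_def by (simp add: sum.delta finite_basis_idx)
  finally show ?thesis .
qed

lemma sum_op_gram_extensions:
  assumes g: "g \<in> histories Out k" and x: "x \<in> basis_idx n d" and y: "y \<in> basis_idx n d"
  shows "k \<le> l \<Longrightarrow> l \<le> m \<Longrightarrow>
    (\<Sum>h\<in>extensions Out g l. op_gram (basis_idx n d) (branch_op h l) x y)
      = op_gram (basis_idx n d) (branch_op g k) x y"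
proof (induction l)
  case 0
  then show ?case
    using g by (simp add: extensions_def histories_0)
next
  case (Suc l)
  let ?I = "basis_idx n d"
  have len: "length g = k"
    using g by (simp add: histories_def)
  show ?case
  proof (cases "k = Suc l")
    case True
    then have "extensions Out g (Suc l) = {g}"
      using g unfolding extensions_def histories_def by auto
    then show ?thesis using True by simp
  next
    case False
    with Suc.prems have "k \<le> l" "l < m" by simp_all
    have fin: "finite (extensions Out g l)"
      using finite_histories[of l] \<open>l < m\<close> by (simp add: extensions_def)
    have "finite (Out h)" if "h \<in> extensions Out g l" for h
      using round_ok[OF \<open>l < m\<close>] that by (simp add: extensions_def locc_round_ok_def)
    then have "(\<Sum>h\<in>extensions Out g (Suc l). op_gram ?I (branch_op h (Suc l)) x y)
        = (\<Sum>h\<in>extensions Out g l. \<Sum>oc\<in>Out h. op_gram ?I (branch_op (h @ [oc]) (Suc l)) x y)"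
      unfolding extensions_Suc[OF \<open>k \<le> l\<close>[folded len]] using fin
      by (simp add: sum.reindex inj_on_def sum.Sigma case_prod_beta)
    also have "\<dots> = (\<Sum>h\<in>extensions Out g l. op_gram ?I (branch_op h l) x y)"
      using sum_op_gram_children[OF \<open>l < m\<close> _ x y] by (intro sum.cong refl) (simp add: extensions_def)
    also have "\<dots> = op_gram ?I (branch_op g k) x y"
      using Suc.IH \<open>k \<le> l\<close> \<open>l < m\<close> by simp
    finally show ?thesis .
  qed
qed

lemma sum_op_gram_histories:
  assumes "x \<in> basis_idx n d" "y \<in> basis_idx n d"
  shows "(\<Sum>h\<in>histories Out m. op_gram (basis_idx n d) (branch_op h m) x y) = op_id x y"
proof -
  have "extensions Out [] m = histories Out m"
    by (simp add: extensions_def)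
  then have "(\<Sum>h\<in>histories Out m. op_gram (basis_idx n d) (branch_op h m) x y)
      = op_gram (basis_idx n d) (branch_op [] 0) x y"
    using sum_op_gram_extensions[of "[]" 0 x y m] assms by (simp add: histories_0)
  also have "\<dots> = op_id x y"
    unfolding op_gram_def using assms
    by (simp add: tens_lop_id op_id_def if_distrib sum.delta finite_basis_idx cong: if_cong)
  finally show ?thesis .
qed

lemma sum_sqnorm_extensions:
  assumes "g \<in> histories Out k" "k \<le> m"
  shows "(\<Sum>h\<in>extensions Out g m. sqnorm (basis_idx n d) (op_apply (basis_idx n d) (branch_op h m) v))
       = sqnorm (basis_idx n d) (op_apply (basis_idx n d) (branch_op g k) v)"
  using sum_op_gram_extensions[OF assms(1) _ _ assms(2)]
  unfolding sqnorm_op_apply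
  by (subst sum.swap, intro sum.cong refl, subst sum.swap)
    (simp add: sum_distrib_left[symmetric] sum_distrib_right[symmetric])

end

lemma pure_state_nonzero:
  assumes "pure_state I v"
  shows "\<exists>x\<in>I. v x \<noteq> 0"
proof (rule ccontr)
  assume "\<not> (\<exists>x\<in>I. v x \<noteq> 0)"
  then have "(\<Sum>x\<in>I. (cmod (v x))\<^sup>2) = 0" by simp
  with assms show False by (simp add: pure_state_def)
qed

lemma kraus_in_SEP1:
  fixes G :: "'a::countable set" and A :: "'a \<Rightarrow> nat \<Rightarrow> lop"
  assumes "finite G" and "\<forall>h\<in>G. \<forall>j<n. loc_invertible (d j) (A h j)"
    and "kraus_complete (basis_idx n d) (\<lambda>h. tens n (A h)) G"
  shows "kraus_apply (basis_idx n d) (\<lambda>h. tens n (A h)) G \<in> SEP1 n d"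
proof -
  have inj: "inj_on to_nat G"
    by (simp add: inj_on_def)
  let ?A = "\<lambda>k. A (from_nat k)"
  have "kraus_complete (basis_idx n d) (\<lambda>k. tens n (?A k)) (to_nat ` G)"
    using assms(3) unfolding kraus_complete_def by (simp add: sum.reindex[OF inj])
  moreover have "kraus_apply (basis_idx n d) (\<lambda>h. tens n (A h)) G
      = kraus_apply (basis_idx n d) (\<lambda>k. tens n (?A k)) (to_nat ` G)"
    unfolding kraus_apply_def by (intro ext) (simp add: sum.reindex[OF inj])
  ultimately show ?thesis
    unfolding SEP1_def using assms(1,2) by (intro CollectI exI[of _ "to_nat ` G"] exI[of _ ?A]) auto
qed

locale locc_transformation = locc_protocol +
  fixes \<psi> \<phi> :: "idx \<Rightarrow> complex"
  assumes psi_nonzero: "\<exists>x\<in>basis_idx n d. \<psi> x \<noteq> 0"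
    and phi_nonzero: "\<exists>x\<in>basis_idx n d. \<phi> x \<noteq> 0"
    and phi_full: "j < n \<Longrightarrow> full_local_rank n d j \<phi>"
    and transforms: "kraus_apply (basis_idx n d) (\<lambda>h. locc_kraus n (basis_idx n d) L h m) (histories Out m)
      (dens (basis_idx n d) \<psi>) = dens (basis_idx n d) \<phi>"
begin

abbreviation state :: "nat list \<Rightarrow> nat \<Rightarrow> idx \<Rightarrow> complex" where
  "state h k \<equiv> op_apply (basis_idx n d) (branch_op h k) \<psi>"

lemma sum_final_states:
  assumes "x \<in> basis_idx n d" "y \<in> basis_idx n d"
  shows "(\<Sum>h\<in>histories Out m. state h m x * cnj (state h m y)) = \<phi> x * cnj (\<phi> y)"
proof -
  have "op_apply (basis_idx n d) (locc_kraus n (basis_idx n d) L h m) \<psi> z = state h m z"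
    if "z \<in> basis_idx n d" for h z
    using that by (intro op_apply_cong) (simp_all add: locc_kraus_eq_tens)
  moreover have "kraus_apply (basis_idx n d) (\<lambda>h. locc_kraus n (basis_idx n d) L h m) (histories Out m)
      (dens (basis_idx n d) \<psi>) x y = \<phi> x * cnj (\<phi> y)"
    using transforms assms by (simp add: dens_def)
  ultimately show ?thesis
    unfolding kraus_apply_dens[OF assms] using assms by simp
qed

lemma final_state_proportional:
  assumes "h \<in> histories Out m"
  obtains c where "\<forall>x\<in>basis_idx n d. state h m x = c * \<phi> x"
proof -
  obtain x0 where x0: "x0 \<in> basis_idx n d" "\<phi> x0 \<noteq> 0"
    using phi_nonzero by blast
  have decomp: "\<forall>x\<in>basis_idx n d. \<forall>y\<in>basis_idx n d.
      (\<Sum>h\<in>histories Out m. state h m x * cnj (state h m y)) = \<phi> x * cnj (\<phi> y)"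
    using sum_final_states by blast
  have "state h m x * \<phi> x0 = state h m x0 * \<phi> x" if "x \<in> basis_idx n d" for x
    using rank_one_decomposition_proportional[where a = "\<lambda>h. state h m",
        OF finite_histories[OF order.refl] decomp assms that x0(1)] .
  then show ?thesis
    using x0(2) by (intro that[of "state h m x0 / \<phi> x0"]) (auto simp: field_simps)
qed

lemma loc_invertible_if_final_state_nonzero:
  assumes "h \<in> histories Out m" "\<exists>x\<in>basis_idx n d. state h m x \<noteq> 0" "j < n"
  shows "loc_invertible (d j) (branch_factor d L h 0 m j)"
proof -
  obtain c where c: "\<forall>x\<in>basis_idx n d. state h m x = c * \<phi> x"
    using final_state_proportional[OF assms(1)] by blast
  with assms(2) have "c \<noteq> 0" by auto
  then show ?thesis
    using loc_invertible_if_tens_image_full[OF assms(3) _ phi_full[OF assms(3)] c] by blast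
qed

lemma full_local_rank_if_state_nonzero:
  assumes g: "g \<in> histories Out k" and "k \<le> m" and j: "j < n"
    and nonzero: "\<exists>x\<in>basis_idx n d. state g k x \<noteq> 0"
  shows "full_local_rank n d j (state g k)"
proof -
  let ?I = "basis_idx n d"
  have "(\<Sum>h\<in>extensions Out g m. sqnorm ?I (state h m)) = sqnorm ?I (state g k)"
    using sum_sqnorm_extensions[OF g \<open>k \<le> m\<close>] .
  also have "\<dots> \<noteq> 0"
    using nonzero by (simp add: sqnorm_eq_0_iff finite_basis_idx)
  finally obtain h where h: "h \<in> extensions Out g m" "sqnorm ?I (state h m) \<noteq> 0"
    by (rule sum.not_neutral_contains_not_neutral)
  have hist: "h \<in> histories Out m"
    using h(1) by (simp add: extensions_def)
  have "branch_factor d L h 0 k = branch_factor d L g 0 k"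
    using h(1) g by (intro branch_factor_take_cong) (simp add: extensions_def histories_def)
  then have split: "state h m x = op_apply ?I (tens n (branch_factor d L h k m)) (state g k) x"
    if "x \<in> ?I" for x
    using op_apply_branch_factor_split[OF \<open>k \<le> m\<close> that] by simp
  obtain c where c: "\<forall>x\<in>?I. state h m x = c * \<phi> x"
    using final_state_proportional[OF hist] by blast
  have "c \<noteq> 0"
    using h(2) c by (auto simp: sqnorm_eq_0_iff finite_basis_idx)
  moreover have "\<forall>x\<in>?I. op_apply ?I (tens n (branch_factor d L h k m)) (state g k) x = c * \<phi> x"
    using c split by simp
  ultimately show ?thesis
    by (rule full_local_rank_if_tens_image_full[OF j _ phi_full[OF j]])
qed

lemma branch_factor_vanishes_if_state_zero:
  "k \<le> m \<Longrightarrow> h \<in> histories Out k \<Longrightarrow> \<forall>x\<in>basis_idx n d. state h k x = 0 \<Longrightarrow>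
    \<exists>j<n. \<forall>a<d j. \<forall>b<d j. branch_factor d L h 0 k j a b = 0"
proof (induction k arbitrary: h)
  case 0
  then show ?case
    using psi_nonzero by (simp add: histories_0 op_apply_tens_lop_id)
next
  case (Suc k)
  let ?I = "basis_idx n d"
  obtain g oc where h: "h = g @ [oc]" and g: "g \<in> histories Out k" and oc: "oc \<in> Out g"
    using Suc.prems(2) unfolding histories_Suc by auto
  have snoc: "branch_factor d L h 0 (Suc k) = (\<lambda>j. lop_mult (d j) (L g oc j) (branch_factor d L g 0 k j))"
    using g unfolding h by (intro branch_factor_snoc) (simp add: histories_def)
  show ?case
  proof (cases "\<forall>x\<in>?I. state g k x = 0")
    case True
    then obtain j where "j < n" "\<forall>a<d j. \<forall>b<d j. branch_factor d L g 0 k j a b = 0"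
      using Suc.IH[OF _ g] Suc.prems(1) by auto
    then show ?thesis
      unfolding snoc by (intro exI[of _ j]) (simp add: lop_mult_def)
  next
    case False
    have round: "locc_round_ok n d Out s L g"
      using Suc.prems(1) by (intro round_ok[OF _ g]) simp
    then have "s g < n"
      by (simp add: locc_round_ok_def)
    have "\<forall>x\<in>?I. op_apply ?I (tens n (L g oc)) (state g k) x = 0"
      using Suc.prems(3) unfolding snoc op_apply_tens_tens by simp
    then have "\<forall>a<d (s g). \<forall>b<d (s g). L g oc (s g) a b = 0"
      using measurement_vanishes_if_full_local_rank[OF \<open>s g < n\<close>
          full_local_rank_if_state_nonzero[OF g _ \<open>s g < n\<close>]] round oc False Suc.prems(1)
      by (simp add: locc_round_ok_def)
    then show ?thesis
      unfolding snoc using \<open>s g < n\<close> by (intro exI[of _ "s g"]) (simp add: lop_mult_def)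
  qed
qed

definition surviving_histories :: "nat list set" where
  "surviving_histories = {h \<in> histories Out m. \<exists>x\<in>basis_idx n d. state h m x \<noteq> 0}"

lemma finite_surviving_histories: "finite surviving_histories"
  using finite_histories[of m] by (simp add: surviving_histories_def)

lemma branch_op_vanishes_unless_surviving:
  assumes "h \<in> histories Out m - surviving_histories" "x \<in> basis_idx n d" "y \<in> basis_idx n d"
  shows "branch_op h m x y = 0"
proof -
  obtain j where "j < n" "\<forall>a<d j. \<forall>b<d j. branch_factor d L h 0 m j a b = 0"
    using branch_factor_vanishes_if_state_zero[of m h] assms(1)
    by (auto simp: surviving_histories_def)
  then show ?thesis
    using assms(2,3) by (rule tens_eq_0)
qed

lemma kraus_complete_surviving:
  "kraus_complete (basis_idx n d) (\<lambda>h. branch_op h m) surviving_histories"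
  unfolding kraus_complete_def
proof (intro ballI)
  fix x y assume x: "x \<in> basis_idx n d" and y: "y \<in> basis_idx n d"
  have "(\<Sum>h\<in>surviving_histories. op_gram (basis_idx n d) (branch_op h m) x y)
      = (\<Sum>h\<in>histories Out m. op_gram (basis_idx n d) (branch_op h m) x y)"
    using finite_histories[of m] branch_op_vanishes_unless_surviving
    by (intro sum.mono_neutral_left) (auto simp: surviving_histories_def op_gram_def x y)
  then show "(\<Sum>h\<in>surviving_histories. \<Sum>z\<in>basis_idx n d. cnj (branch_op h m z x) * branch_op h m z y)
      = op_id x y"
    using sum_op_gram_histories[OF x y] by (simp add: op_gram_def)
qed

lemma kraus_apply_surviving:
  "kraus_apply (basis_idx n d) (\<lambda>h. branch_op h m) surviving_histories (dens (basis_idx n d) \<psi>)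
     = dens (basis_idx n d) \<phi>"
proof (intro ext)
  fix x y
  let ?I = "basis_idx n d"
  show "kraus_apply ?I (\<lambda>h. branch_op h m) surviving_histories (dens ?I \<psi>) x y = dens ?I \<phi> x y"
  proof (cases "x \<in> ?I \<and> y \<in> ?I")
    case True
    then have "kraus_apply ?I (\<lambda>h. branch_op h m) surviving_histories (dens ?I \<psi>) x y
        = (\<Sum>h\<in>histories Out m. state h m x * cnj (state h m y))"
      using finite_histories[of m] by (simp add: kraus_apply_dens, intro sum.mono_neutral_left)
        (auto simp: surviving_histories_def)
    then show ?thesis
      using sum_final_states True by (simp add: dens_def)
  qed (auto simp: kraus_apply_def dens_def)
qed

theorem SEP1_transformation: "\<exists>\<Lambda>'\<in>SEP1 n d. \<Lambda>' (dens (basis_idx n d) \<psi>) = dens (basis_idx n d) \<phi>"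
proof -
  have "\<forall>h\<in>surviving_histories. \<forall>j<n. loc_invertible (d j) (branch_factor d L h 0 m j)"
    by (auto simp: surviving_histories_def intro: loc_invertible_if_final_state_nonzero)
  then have "kraus_apply (basis_idx n d) (\<lambda>h. branch_op h m) surviving_histories \<in> SEP1 n d"
    using finite_surviving_histories kraus_complete_surviving by (intro kraus_in_SEP1)
  then show ?thesis
    using kraus_apply_surviving by blast
qed

end

theorem lemma1:
  fixes n :: nat and d :: "nat \<Rightarrow> nat" and \<psi> \<phi> :: "idx \<Rightarrow> complex" and \<Lambda> :: "op \<Rightarrow> op"
  assumes dpos: "\<forall>j<n. 0 < d j"
    and psi: "pure_state (basis_idx n d) \<psi>" "fully_entangled n d \<psi>"
    and phi: "pure_state (basis_idx n d) \<phi>" "fully_entangled n d \<phi>"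
    and L: "\<Lambda> \<in> LOCC_N n d"
    and trans: "\<Lambda> (dens (basis_idx n d) \<psi>) = dens (basis_idx n d) \<phi>"
  shows "\<exists>\<Lambda>' \<in> SEP1 n d. \<Lambda>' (dens (basis_idx n d) \<psi>) = dens (basis_idx n d) \<phi>"
proof -
  obtain m Out s L where rounds: "\<forall>k<m. \<forall>h\<in>histories Out k. locc_round_ok n d Out s L h"
    and \<Lambda>: "\<Lambda> = kraus_apply (basis_idx n d) (\<lambda>h. locc_kraus n (basis_idx n d) L h m) (histories Out m)"
    using L unfolding LOCC_N_def by blast
  interpret locc_transformation n d Out s L m \<psi> \<phi>
  proof
    show "locc_round_ok n d Out s L h" if "k < m" "h \<in> histories Out k" for k h
      using rounds that by blast
    show "\<exists>x\<in>basis_idx n d. \<psi> x \<noteq> 0"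
      using psi(1) by (rule pure_state_nonzero)
    show "\<exists>x\<in>basis_idx n d. \<phi> x \<noteq> 0"
      using phi(1) by (rule pure_state_nonzero)
    show "full_local_rank n d j \<phi>" if "j < n" for j
      using phi(2) that by (simp add: fully_entangled_def full_local_rank_if_reduced_dm_rank)
    show "kraus_apply (basis_idx n d) (\<lambda>h. locc_kraus n (basis_idx n d) L h m) (histories Out m)
        (dens (basis_idx n d) \<psi>) = dens (basis_idx n d) \<phi>"
      using trans by (simp add: \<Lambda>)
  qed
  show ?thesis
    by (rule SEP1_transformation)
qed

end
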